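(* Let $H$ be a bipartite matching covered graph and $u$ a vertex of $H$ of degree at least three. If $f_1$ and $f_2$ are two edges incident with $u$ that lie in a common 4-cycle of $H$, then at least one of $f_1,f_2$ is removable in $H$.
   Context: Graphs may have multiple edges but no loops. An edge is admissible if it lies in some perfect matching. A connected graph with at least two vertices is matching covered if every edge is admissible. An edge $e$ of a matching covered graph $H$ is removable if $H-e$ is matching covered. *)

theory Defs
  imports Main
begin

text \<open>A finite loopless multigraph: vertex set V, edge set E (edge identifiers),
  and an incidence map ends giving the two distinct endpoints of each edge.\<close>

definition multigraph :: "'v set \<Rightarrow> 'e set \<Rightarrow> ('e \<Rightarrow> 'v set) \<Rightarrow> bool" where
  "multigraph V E ends \<longleftrightarrow> finite V \<and> finite E \<and>
     (\<forall>e\<in>E. ends e \<subseteq> V \<and> card (ends e) = 2)"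

definition perfect_matching :: "'v set \<Rightarrow> 'e set \<Rightarrow> ('e \<Rightarrow> 'v set) \<Rightarrow> 'e set \<Rightarrow> bool" where
  "perfect_matching V E ends M \<longleftrightarrow> M \<subseteq> E \<and> (\<forall>v\<in>V. \<exists>!e. e \<in> M \<and> v \<in> ends e)"

definition admissible :: "'v set \<Rightarrow> 'e set \<Rightarrow> ('e \<Rightarrow> 'v set) \<Rightarrow> 'e \<Rightarrow> bool" where
  "admissible V E ends e \<longleftrightarrow> (\<exists>M. perfect_matching V E ends M \<and> e \<in> M)"

definition adj_rel :: "'e set \<Rightarrow> ('e \<Rightarrow> 'v set) \<Rightarrow> ('v \<times> 'v) set" where
  "adj_rel E ends = {(x, y). \<exists>e\<in>E. ends e = {x, y}}"

definition graph_connected :: "'v set \<Rightarrow> 'e set \<Rightarrow> ('e \<Rightarrow> 'v set) \<Rightarrow> bool" where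
  "graph_connected V E ends \<longleftrightarrow> V \<noteq> {} \<and> (\<forall>x\<in>V. \<forall>y\<in>V. (x, y) \<in> (adj_rel E ends)\<^sup>*)"

definition matching_covered :: "'v set \<Rightarrow> 'e set \<Rightarrow> ('e \<Rightarrow> 'v set) \<Rightarrow> bool" where
  "matching_covered V E ends \<longleftrightarrow> multigraph V E ends \<and> graph_connected V E ends \<and>
     card V \<ge> 2 \<and> (\<forall>e\<in>E. admissible V E ends e)"

definition removable :: "'v set \<Rightarrow> 'e set \<Rightarrow> ('e \<Rightarrow> 'v set) \<Rightarrow> 'e \<Rightarrow> bool" where
  "removable V E ends e \<longleftrightarrow> e \<in> E \<and> matching_covered V (E - {e}) ends"

definition bipartite :: "'v set \<Rightarrow> 'e set \<Rightarrow> ('e \<Rightarrow> 'v set) \<Rightarrow> bool" where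
  "bipartite V E ends \<longleftrightarrow> (\<exists>A B. A \<union> B = V \<and> A \<inter> B = {} \<and>
     (\<forall>e\<in>E. \<exists>a\<in>A. \<exists>b\<in>B. ends e = {a, b}))"

definition degree :: "'e set \<Rightarrow> ('e \<Rightarrow> 'v set) \<Rightarrow> 'v \<Rightarrow> nat" where
  "degree E ends v = card {e\<in>E. v \<in> ends e}"

definition in_common_4cycle :: "'v set \<Rightarrow> 'e set \<Rightarrow> ('e \<Rightarrow> 'v set) \<Rightarrow> 'e \<Rightarrow> 'e \<Rightarrow> bool" where
  "in_common_4cycle V E ends f1 f2 \<longleftrightarrow>
     (\<exists>u a w b f3 f4. distinct [u, a, w, b] \<and> {u, a, w, b} \<subseteq> V \<and>
        f1 \<in> E \<and> f2 \<in> E \<and> f3 \<in> E \<and> f4 \<in> E \<and>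
        ends f1 = {u, a} \<and> ends f3 = {a, w} \<and> ends f4 = {w, b} \<and> ends f2 = {b, u})"

end

theory Submission
  imports Defs
begin

(*
  Let (A, B) be the bipartition with u in A and let u a w b be the 4-cycle, f1 = ua, f2 = ub.
  Since H is matching covered, every set Z with {} < Z < A has surplus: |N(Z)| > |Z|.
  If f1 is not removable, H - f1 is still connected and has a perfect matching (one through aw),
  so some edge of H - f1 is inadmissible there; the alternating-path argument of Koenig turns it into
  a set X in A with u in X, w not in X, |N(X)| <= |X| + 1 and f1 the only edge between X and a.
  Likewise f2 gives Y. Submodularity of |N| together with the surplus of X union Y yields
  |N(X inter Y)| <= |X inter Y| + 1, whereas a and b are neighbours of X inter Y reached only from u,
  and u has a third neighbour, so |N(X inter Y)| >= |X inter Y| + 2.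
*)

definition bipartition :: "'v set \<Rightarrow> 'e set \<Rightarrow> ('e \<Rightarrow> 'v set) \<Rightarrow> 'v set \<Rightarrow> 'v set \<Rightarrow> bool" where
  "bipartition V E ends A B \<longleftrightarrow>
     A \<union> B = V \<and> A \<inter> B = {} \<and> (\<forall>e\<in>E. \<exists>a\<in>A. \<exists>b\<in>B. ends e = {a, b})"

lemma bipartition_swap: "bipartition V E ends A B \<Longrightarrow> bipartition V E ends B A"
  unfolding bipartition_def by (simp add: Int_commute Un_commute) (metis insert_commute)

lemma bipartite_obtain_side:
  assumes "bipartite V E ends" "u \<in> V"
  obtains A B where "bipartition V E ends A B" "u \<in> A"
proof -
  obtain A B where AB: "bipartition V E ends A B"
    using assms(1) unfolding bipartite_def bipartition_def by blast
  show thesis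
  proof (cases "u \<in> A")
    case True
    with AB that show thesis by blast
  next
    case False
    with AB assms(2) have "u \<in> B" unfolding bipartition_def by blast
    with bipartition_swap[OF AB] that show thesis by blast
  qed
qed

lemma bipartition_mono: "bipartition V E ends A B \<Longrightarrow> E' \<subseteq> E \<Longrightarrow> bipartition V E' ends A B"
  unfolding bipartition_def by blast

lemma bipartition_edge:
  assumes "bipartition V E ends A B" "g \<in> E" "ends g = {p, q}"
  shows "p \<in> A \<longleftrightarrow> q \<in> B"
proof -
  obtain a b where "a \<in> A" "b \<in> B" "ends g = {a, b}" "A \<inter> B = {}"
    using assms(1,2) unfolding bipartition_def by blast
  moreover from this assms(3) have "(p = a \<and> q = b) \<or> (p = b \<and> q = a)"
    by (simp add: doubleton_eq_iff)
  ultimately show ?thesis by blast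
qed

definition neighbours :: "'e set \<Rightarrow> ('e \<Rightarrow> 'v set) \<Rightarrow> 'v set \<Rightarrow> 'v set" where
  "neighbours E ends Z = {v. \<exists>g\<in>E. \<exists>z\<in>Z. ends g = {z, v}}"

lemma neighbours_Un: "neighbours E ends (X \<union> Y) = neighbours E ends X \<union> neighbours E ends Y"
  unfolding neighbours_def by blast

lemma neighbours_mono: "X \<subseteq> Y \<Longrightarrow> neighbours E ends X \<subseteq> neighbours E ends Y"
  unfolding neighbours_def by blast

lemma neighbours_Diff_edge:
  "ends f \<inter> Z = {} \<Longrightarrow> neighbours (E - {f}) ends Z = neighbours E ends Z"
  unfolding neighbours_def by auto

lemma neighbours_subset_insert_Diff_edge:
  assumes "ends f = {u, a}" "a \<notin> Z"
  shows "neighbours E ends Z \<subseteq> insert a (neighbours (E - {f}) ends Z)"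
proof
  fix v assume "v \<in> neighbours E ends Z"
  then obtain g z where g: "g \<in> E" "z \<in> Z" "ends g = {z, v}" unfolding neighbours_def by blast
  show "v \<in> insert a (neighbours (E - {f}) ends Z)"
  proof (cases "g = f")
    case True
    with g(3) assms(1) have "{z, v} = {u, a}" by simp
    with g(2) assms(2) have "v = a" by (auto simp: doubleton_eq_iff)
    then show ?thesis by blast
  next
    case False
    with g show ?thesis unfolding neighbours_def by blast
  qed
qed

lemma neighbours_subset_side:
  assumes "bipartition V E ends A B" "Z \<subseteq> A"
  shows "neighbours E ends Z \<subseteq> B"
proof
  fix v assume "v \<in> neighbours E ends Z"
  then obtain g z where "g \<in> E" "z \<in> Z" "ends g = {z, v}" unfolding neighbours_def by blast
  with assms bipartition_edge[of V E ends A B g z v] show "v \<in> B" by blast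
qed

lemma finite_neighbours: "multigraph V E ends \<Longrightarrow> finite (neighbours E ends Z)"
  unfolding multigraph_def neighbours_def by (auto intro: finite_subset)

definition mate :: "'e set \<Rightarrow> ('e \<Rightarrow> 'v set) \<Rightarrow> 'v \<Rightarrow> 'v" where
  "mate M ends v = (THE t. \<exists>g\<in>M. ends g = {v, t})"

lemma perfect_matching_unique:
  "perfect_matching V E ends M \<Longrightarrow> v \<in> V \<Longrightarrow> g \<in> M \<Longrightarrow> h \<in> M \<Longrightarrow> v \<in> ends g \<Longrightarrow> v \<in> ends h
    \<Longrightarrow> g = h"
  unfolding perfect_matching_def by metis

lemma perfect_matchingE:
  assumes "perfect_matching V E ends M" "s \<in> V"
  obtains k where "k \<in> M" "s \<in> ends k" "\<And>k'. k' \<in> M \<Longrightarrow> s \<in> ends k' \<Longrightarrow> k' = k"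
proof -
  from assms obtain k where "k \<in> M" "s \<in> ends k" unfolding perfect_matching_def by blast
  with perfect_matching_unique[OF assms] that show thesis by blast
qed

lemma perfect_matching_edge_mate:
  assumes mg: "multigraph V E ends" and pm: "perfect_matching V E ends M"
    and "v \<in> V" "g \<in> M" "v \<in> ends g"
  shows "ends g = {v, mate M ends v}" "mate M ends v \<noteq> v"
proof -
  have "g \<in> E" using assms(4) pm unfolding perfect_matching_def by auto
  then have "card (ends g) = 2" using mg unfolding multigraph_def by auto
  then obtain x y where xy: "ends g = {x, y}" "x \<noteq> y" by (auto simp: card_2_iff)
  obtain t where t: "ends g = {v, t}" "t \<noteq> v"
  proof (cases "v = x")
    case True
    with xy that show thesis by blast
  next
    case False
    with xy assms(5) have "v = y" by blast
    with xy that[of x] show thesis by (simp add: insert_commute)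
  qed
  have "\<exists>!t. \<exists>g\<in>M. ends g = {v, t}"
  proof
    show "\<exists>g\<in>M. ends g = {v, t}" using assms(4) t by blast
  next
    fix t' assume "\<exists>g'\<in>M. ends g' = {v, t'}"
    then obtain g' where "g' \<in> M" "ends g' = {v, t'}" by blast
    moreover from this have "g' = g"
      using perfect_matching_unique[OF pm \<open>v \<in> V\<close> _ assms(4) _ assms(5)] by simp
    ultimately have "{v, t'} = {v, t}" using t(1) by simp
    with t(2) show "t' = t" by (simp add: doubleton_eq_iff)
  qed
  then have "mate M ends v = t"
    unfolding mate_def by (rule the1_equality) (use assms(4) t(1) in blast)
  then show "ends g = {v, mate M ends v}" "mate M ends v \<noteq> v" using t by auto
qed

lemma perfect_matching_mate:
  assumes mg: "multigraph V E ends" and pm: "perfect_matching V E ends M" and "v \<in> V"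
  obtains g where "g \<in> M" "ends g = {v, mate M ends v}"
  using assms perfect_matching_edge_mate(1)[OF mg pm] unfolding perfect_matching_def by metis

lemma mate_in_V:
  assumes "multigraph V E ends" "perfect_matching V E ends M" "v \<in> V"
  shows "mate M ends v \<in> V"
proof -
  obtain g where "g \<in> M" "ends g = {v, mate M ends v}"
    using perfect_matching_mate[OF assms] .
  with assms(1,2) show ?thesis unfolding multigraph_def perfect_matching_def by blast
qed

lemma mate_mate:
  assumes mg: "multigraph V E ends" and pm: "perfect_matching V E ends M" and "v \<in> V"
  shows "mate M ends (mate M ends v) = v"
proof -
  obtain g where g: "g \<in> M" "ends g = {v, mate M ends v}"
    using perfect_matching_mate[OF assms] .
  have "ends g = {mate M ends v, mate M ends (mate M ends v)}"
    using perfect_matching_edge_mate(1)[OF mg pm mate_in_V[OF assms] g(1)] g(2) by simp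
  with g(2) perfect_matching_edge_mate(2)[OF mg pm mate_in_V[OF assms] g(1)] show ?thesis
    by (auto simp: doubleton_eq_iff)
qed

lemma mate_side:
  assumes "multigraph V E ends" "perfect_matching V E ends M" "bipartition V E ends A B" "v \<in> V"
  shows "v \<in> A \<longleftrightarrow> mate M ends v \<in> B"
proof -
  obtain g where "g \<in> M" "ends g = {v, mate M ends v}"
    using perfect_matching_mate[OF assms(1,2,4)] .
  moreover have "M \<subseteq> E" using assms(2) unfolding perfect_matching_def by simp
  ultimately show ?thesis using bipartition_edge[OF assms(3)] by blast
qed

lemma mate_image_neighbours:
  assumes mg: "multigraph V E ends" and pm: "perfect_matching V E ends M" and "Z \<subseteq> V"
  shows "mate M ends ` Z \<subseteq> neighbours E ends Z"
proof
  fix t assume "t \<in> mate M ends ` Z"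
  then obtain z where z: "z \<in> Z" "t = mate M ends z" by blast
  obtain g where "g \<in> M" "ends g = {z, mate M ends z}"
    using perfect_matching_mate[OF mg pm] z(1) assms(3) by blast
  moreover have "M \<subseteq> E" using pm unfolding perfect_matching_def by simp
  ultimately show "t \<in> neighbours E ends Z" using z unfolding neighbours_def by blast
qed

lemma inj_on_mate:
  assumes "multigraph V E ends" "perfect_matching V E ends M"
  shows "inj_on (mate M ends) V"
  by (rule inj_on_inverseI[where g = "mate M ends"]) (rule mate_mate[OF assms])

lemma card_less_neighbours_if_mate_outside:
  assumes mg: "multigraph V E ends" and pm: "perfect_matching V E ends M"
    and Z: "Z \<subseteq> V" and s: "s \<in> neighbours E ends Z" "mate M ends s \<notin> Z"
  shows "card Z < card (neighbours E ends Z)"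
proof -
  let ?N = "neighbours E ends Z" and ?m = "mate M ends"
  have "s \<notin> ?m ` Z"
  proof
    assume "s \<in> ?m ` Z"
    then obtain x where "x \<in> Z" "s = ?m x" by blast
    with mate_mate[OF mg pm, of x] Z have "?m s = x" by blast
    with s(2) \<open>x \<in> Z\<close> show False by simp
  qed
  then have "?m ` Z \<subseteq> ?N - {s}" using mate_image_neighbours[OF mg pm Z] by blast
  then have "card (?m ` Z) \<le> card (?N - {s})" using finite_neighbours[OF mg] by (intro card_mono) auto
  moreover have "card (?m ` Z) = card Z"
    using Z by (intro card_image inj_on_subset[OF inj_on_mate[OF mg pm]])
  moreover have "card (?N - {s}) < card ?N" using finite_neighbours[OF mg] s(1) by (rule card_Diff1_less)
  ultimately show ?thesis by linarith
qed

lemma rtrancl_leaves_set: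
  assumes "(p, q) \<in> r\<^sup>*" "p \<in> S" "q \<notin> S"
  shows "\<exists>s s'. (s, s') \<in> r \<and> s \<in> S \<and> s' \<notin> S"
  using assms by (induction rule: rtrancl_induct) auto

text \<open>A path from Z to a vertex of A - Z leaves Z \<union> N(Z) by an edge ss' with s in N(Z); a perfect
  matching through that edge then maps Z injectively into N(Z) - {s}.\<close>

lemma matching_covered_surplus:
  assumes mc: "matching_covered V E ends" and AB: "bipartition V E ends A B"
    and Z: "Z \<subseteq> A" "Z \<noteq> {}" "t \<in> A" "t \<notin> Z"
  shows "card Z < card (neighbours E ends Z)"
proof -
  let ?N = "neighbours E ends Z"
  have mg: "multigraph V E ends" using mc unfolding matching_covered_def by simp
  have AV: "A \<subseteq> V" using AB unfolding bipartition_def by blast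
  have NB: "?N \<subseteq> B" using neighbours_subset_side[OF AB Z(1)] .
  obtain z where z: "z \<in> Z" using Z(2) by blast
  have "(z, t) \<in> (adj_rel E ends)\<^sup>*"
    using mc z Z(1,3) AV unfolding matching_covered_def graph_connected_def by blast
  moreover have "t \<notin> Z \<union> ?N" using NB Z(3,4) AB unfolding bipartition_def by blast
  ultimately obtain s s' where ss: "(s, s') \<in> adj_rel E ends" "s \<in> Z \<union> ?N" "s' \<notin> Z \<union> ?N"
    using rtrancl_leaves_set[of z t _ "Z \<union> ?N"] z by blast
  then obtain g where g: "g \<in> E" "ends g = {s, s'}" unfolding adj_rel_def by blast
  have "s \<notin> Z" using ss(3) g unfolding neighbours_def by blast
  then have sN: "s \<in> ?N" using ss(2) by blast
  then have "s \<in> V" using NB AB unfolding bipartition_def by blast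
  have "admissible V E ends g" using mc g(1) unfolding matching_covered_def by blast
  then obtain M where M: "perfect_matching V E ends M" "g \<in> M" unfolding admissible_def by blast
  have "ends g = {s, mate M ends s}"
    using perfect_matching_edge_mate(1)[OF mg M(1) \<open>s \<in> V\<close> M(2)] g(2) by simp
  then have "mate M ends s = s'" using g(2) perfect_matching_edge_mate(2)[OF mg M(1) \<open>s \<in> V\<close> M(2)]
    by (auto simp: doubleton_eq_iff)
  with ss(3) have "mate M ends s \<notin> Z" by blast
  from card_less_neighbours_if_mate_outside[OF mg M(1) _ sN this] Z(1) AV show ?thesis by blast
qed

lemma sym_adj_rel: "sym (adj_rel E ends)"
  unfolding adj_rel_def sym_def by (auto simp: insert_commute)

lemma adj_rel_rtranclI: "g \<in> E \<Longrightarrow> ends g = {x, y} \<Longrightarrow> (x, y) \<in> (adj_rel E ends)\<^sup>*"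
  unfolding adj_rel_def by blast

lemma graph_connected_Diff_edge:
  assumes conn: "graph_connected V E ends" and f: "ends f = {p, q}"
    and path: "(p, q) \<in> (adj_rel (E - {f}) ends)\<^sup>*"
  shows "graph_connected V (E - {f}) ends"
proof -
  let ?R = "(adj_rel (E - {f}) ends)\<^sup>*"
  have "(q, p) \<in> ?R" using symD[OF sym_rtrancl[OF sym_adj_rel] path] .
  have "adj_rel E ends \<subseteq> ?R"
  proof
    fix xy assume "xy \<in> adj_rel E ends"
    then obtain x y g where xy: "xy = (x, y)" "g \<in> E" "ends g = {x, y}"
      unfolding adj_rel_def by blast
    show "xy \<in> ?R"
    proof (cases "g = f")
      case True
      with xy f have "(x = p \<and> y = q) \<or> (x = q \<and> y = p)" by (auto simp: doubleton_eq_iff)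
      with path \<open>(q, p) \<in> ?R\<close> xy(1) show ?thesis by auto
    next
      case False
      with xy show ?thesis unfolding adj_rel_def by blast
    qed
  qed
  then have "(adj_rel E ends)\<^sup>* \<subseteq> ?R" by (rule rtrancl_subset_rtrancl)
  with conn show ?thesis unfolding graph_connected_def by (meson subsetD)
qed

definition near_perfect_matching ::
    "'v set \<Rightarrow> 'e set \<Rightarrow> ('e \<Rightarrow> 'v set) \<Rightarrow> 'e set \<Rightarrow> 'v set \<Rightarrow> bool" where
  "near_perfect_matching V E ends M S \<longleftrightarrow>
     perfect_matching (V - S) E ends M \<and> (\<forall>g\<in>M. ends g \<inter> S = {})"

lemma near_perfect_matching_empty:
  "near_perfect_matching V E ends M {} \<longleftrightarrow> perfect_matching V E ends M"
  unfolding near_perfect_matching_def by simp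

lemma near_perfect_matching_Diff:
  assumes npm: "near_perfect_matching V E ends M S" and h: "h \<in> M" "ends h \<subseteq> V"
  shows "near_perfect_matching V E ends (M - {h}) (S \<union> ends h)"
proof -
  have pm: "perfect_matching (V - S) E ends M" and avoid: "\<And>k. k \<in> M \<Longrightarrow> ends k \<inter> S = {}"
    using npm unfolding near_perfect_matching_def by blast+
  have disj: "ends k \<inter> ends h = {}" if "k \<in> M - {h}" for k
  proof (rule ccontr)
    assume "ends k \<inter> ends h \<noteq> {}"
    then obtain t where t: "t \<in> ends k" "t \<in> ends h" by blast
    with h avoid have "t \<in> V - S" by blast
    from perfect_matching_unique[OF pm this _ h(1) t] that show False by blast
  qed
  show ?thesis
    unfolding near_perfect_matching_def perfect_matching_def
  proof (intro conjI ballI)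
    show "M - {h} \<subseteq> E" using pm unfolding perfect_matching_def by blast
  next
    fix t assume t: "t \<in> V - (S \<union> ends h)"
    then have tS: "t \<in> V - S" by blast
    obtain k where "k \<in> M" "t \<in> ends k" "\<And>k'. k' \<in> M \<Longrightarrow> t \<in> ends k' \<Longrightarrow> k' = k"
      using perfect_matchingE[OF pm tS] by blast
    with t show "\<exists>!k. k \<in> M - {h} \<and> t \<in> ends k" by blast
  next
    fix k assume "k \<in> M - {h}"
    with avoid disj show "ends k \<inter> (S \<union> ends h) = {}" by blast
  qed
qed

lemma near_perfect_matching_insert:
  assumes npm: "near_perfect_matching V E ends M S" and g: "g \<in> E" "ends g \<subseteq> S"
  shows "near_perfect_matching V E ends (insert g M) (S - ends g)"
proof -
  have pm: "perfect_matching (V - S) E ends M" and avoid: "\<And>k. k \<in> M \<Longrightarrow> ends k \<inter> S = {}"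
    using npm unfolding near_perfect_matching_def by blast+
  show ?thesis
    unfolding near_perfect_matching_def perfect_matching_def
  proof (intro conjI ballI)
    show "insert g M \<subseteq> E" using pm g(1) unfolding perfect_matching_def by blast
  next
    fix t assume t: "t \<in> V - (S - ends g)"
    show "\<exists>!k. k \<in> insert g M \<and> t \<in> ends k"
    proof (cases "t \<in> ends g")
      case True
      with g(2) avoid show ?thesis by blast
    next
      case False
      with t have tS: "t \<in> V - S" by blast
      obtain k where "k \<in> M" "t \<in> ends k" "\<And>k'. k' \<in> M \<Longrightarrow> t \<in> ends k' \<Longrightarrow> k' = k"
        using perfect_matchingE[OF pm tS] by blast
      with False show ?thesis by blast
    qed
  next
    fix k assume "k \<in> insert g M"
    with avoid show "ends k \<inter> (S - ends g) = {}" by blast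
  qed
qed

lemma near_perfect_matching_exchange:
  assumes npm: "near_perfect_matching V E ends M {y, z}" and "y \<noteq> z"
    and g: "g \<in> E" "ends g = {z, v}"
    and h: "h \<in> M" "ends h = {v, t}" "v \<noteq> t" "v \<in> V" "t \<in> V"
  shows "near_perfect_matching V E ends (insert g (M - {h})) {y, t}"
proof -
  have "ends h \<inter> {y, z} = {}" using npm h(1) unfolding near_perfect_matching_def by blast
  with h(2) have vt: "v \<noteq> y" "v \<noteq> z" "t \<noteq> y" "t \<noteq> z" by auto
  have "near_perfect_matching V E ends (M - {h}) ({y, z} \<union> {v, t})"
    using near_perfect_matching_Diff[OF npm h(1)] h(2,4,5) by simp
  then have "near_perfect_matching V E ends (insert g (M - {h})) ({y, z} \<union> {v, t} - ends g)"
    using g by (intro near_perfect_matching_insert) auto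
  moreover have "{y, z} \<union> {v, t} - ends g = {y, t}" using g(2) vt h(3) \<open>y \<noteq> z\<close> by auto
  ultimately show ?thesis by simp
qed

definition alternating_step :: "'e set \<Rightarrow> 'e set \<Rightarrow> ('e \<Rightarrow> 'v set) \<Rightarrow> 'v set \<Rightarrow> ('v \<times> 'v) set" where
  "alternating_step E M ends B = {(z, mate M ends v) | z v. \<exists>g\<in>E. ends g = {z, v} \<and> v \<in> B}"

lemma alternating_step_side:
  assumes "multigraph V E ends" "perfect_matching V E ends M" "bipartition V E ends A B"
    and "(z, z') \<in> alternating_step E M ends B"
  shows "z \<in> A" "z' \<in> A"
proof -
  obtain g v where g: "g \<in> E" "ends g = {z, v}" "v \<in> B" "z' = mate M ends v"
    using assms(4) unfolding alternating_step_def by blast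
  show "z \<in> A" using bipartition_edge[OF assms(3) g(1,2)] g(3) by simp
  have "v \<in> V" using g(3) assms(3) unfolding bipartition_def by blast
  then show "z' \<in> A"
    using mate_side[OF assms(1,2) bipartition_swap[OF assms(3)]] g(3,4) by simp
qed

lemma alternating_rtrancl_side:
  assumes "multigraph V E ends" "perfect_matching V E ends M" "bipartition V E ends A B"
    and "(z0, z) \<in> (alternating_step E M ends B)\<^sup>*" "z0 \<in> A"
  shows "z \<in> A"
  using assms(4,5) by (induction rule: rtrancl_induct) (auto dest: alternating_step_side(2)[OF assms(1-3)])

lemma near_perfect_matching_alternating_step:
  assumes mg: "multigraph V E ends" and pm: "perfect_matching V E ends M"
    and AB: "bipartition V E ends A B" and "y \<in> B"
    and M': "near_perfect_matching V E ends M' {y, z}"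
    and step: "(z, z') \<in> alternating_step E M ends B"
    and keep: "\<forall>h\<in>M. z' \<in> ends h \<longrightarrow> h \<in> M'"
  obtains M'' where "near_perfect_matching V E ends M'' {y, z'}"
    "\<forall>k\<in>M'. z' \<notin> ends k \<longrightarrow> k \<in> M''"
proof -
  obtain g v where g: "g \<in> E" "ends g = {z, v}" "v \<in> B" "z' = mate M ends v"
    using step unfolding alternating_step_def by blast
  have "z \<in> A" "z' \<in> A" using alternating_step_side[OF mg pm AB step] by blast+
  then have "y \<noteq> z" "v \<in> V" "z' \<in> V" using \<open>y \<in> B\<close> g(3) AB unfolding bipartition_def by blast+
  obtain h where h: "h \<in> M" "ends h = {v, z'}"
    using perfect_matching_mate[OF mg pm \<open>v \<in> V\<close>] g(4) by blast
  have "v \<noteq> z'" using perfect_matching_edge_mate(2)[OF mg pm \<open>v \<in> V\<close> h(1)] h(2) g(4) by auto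
  have "h \<in> M'" using keep h by blast
  have "near_perfect_matching V E ends (insert g (M' - {h})) {y, z'}"
    by (rule near_perfect_matching_exchange[OF M' \<open>y \<noteq> z\<close> g(1,2) \<open>h \<in> M'\<close> h(2) \<open>v \<noteq> z'\<close>
          \<open>v \<in> V\<close> \<open>z' \<in> V\<close>])
  moreover have "\<forall>k\<in>M'. z' \<notin> ends k \<longrightarrow> k \<in> insert g (M' - {h})" using h(2) by blast
  ultimately show thesis using that by blast
qed

text \<open>Induction on the distance from x0 = mate y. Matching edges disjoint from the ball of
  vertices reached so far are never exchanged, so the matching edge needed by the next step is
  still available.\<close>

lemma alternating_reachable_near_perfect_matching:
  assumes mg: "multigraph V E ends" and pm: "perfect_matching V E ends M"
    and AB: "bipartition V E ends A B" and "y \<in> B"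
    and reach: "(mate M ends y, z) \<in> (alternating_step E M ends B)\<^sup>*"
  obtains M' where "near_perfect_matching V E ends M' {y, z}"
proof -
  let ?R = "alternating_step E M ends B" and ?m = "mate M ends"
  define ball where "ball n = {z. \<exists>j\<le>n. (?m y, z) \<in> ?R ^^ j}" for n
  have BV: "B \<subseteq> V" and disj: "A \<inter> B = {}" using AB unfolding bipartition_def by blast+
  have x0A: "?m y \<in> A" using mate_side[OF mg pm bipartition_swap[OF AB]] \<open>y \<in> B\<close> BV by blast
  have ball_A: "ball n \<subseteq> A" for n
    unfolding ball_def using alternating_rtrancl_side[OF mg pm AB _ x0A] relpow_imp_rtrancl by blast
  have "\<forall>z\<in>ball n. \<exists>M'. near_perfect_matching V E ends M' {y, z} \<and>
          (\<forall>h\<in>M. ends h \<inter> ball n = {} \<longrightarrow> h \<in> M')" for n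
  proof (induction n)
    case 0
    obtain g0 where g0: "g0 \<in> M" "ends g0 = {y, ?m y}"
      using perfect_matching_mate[OF mg pm] \<open>y \<in> B\<close> BV by blast
    have "ends g0 \<subseteq> V" using g0 pm mg unfolding perfect_matching_def multigraph_def by blast
    from near_perfect_matching_Diff[OF pm[folded near_perfect_matching_empty] g0(1) this] g0(2)
    have "near_perfect_matching V E ends (M - {g0}) {y, ?m y}" by simp
    moreover have "h \<in> M - {g0}" if "h \<in> M" "ends h \<inter> {?m y} = {}" for h
      using that g0(2) by auto
    moreover have "ball 0 = {?m y}" unfolding ball_def by simp
    ultimately show ?case by auto
  next
    case (Suc n)
    have ball_mono: "ball n \<subseteq> ball (Suc n)" unfolding ball_def using le_SucI by blast
    show ?case
    proof
      fix z' assume z': "z' \<in> ball (Suc n)"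
      show "\<exists>M'. near_perfect_matching V E ends M' {y, z'} \<and>
              (\<forall>h\<in>M. ends h \<inter> ball (Suc n) = {} \<longrightarrow> h \<in> M')"
      proof (cases "z' \<in> ball n")
        case True
        with Suc.IH obtain M' where M': "near_perfect_matching V E ends M' {y, z'}"
          and keep: "\<forall>h\<in>M. ends h \<inter> ball n = {} \<longrightarrow> h \<in> M'" by blast
        from keep ball_mono have "\<forall>h\<in>M. ends h \<inter> ball (Suc n) = {} \<longrightarrow> h \<in> M'" by blast
        with M' show ?thesis by blast
      next
        case False
        from z' obtain j where j: "j \<le> Suc n" "(?m y, z') \<in> ?R ^^ j" unfolding ball_def by blast
        have "\<not> j \<le> n" using False j(2) unfolding ball_def by blast
        with j have "(?m y, z') \<in> ?R ^^ Suc n" by (metis le_SucE)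
        then obtain z where "(?m y, z) \<in> ?R ^^ n" and step: "(z, z') \<in> ?R" by (rule relpow_Suc_E)
        then have "z \<in> ball n" unfolding ball_def by blast
        with Suc.IH obtain M' where M': "near_perfect_matching V E ends M' {y, z}"
          and keep: "\<forall>h\<in>M. ends h \<inter> ball n = {} \<longrightarrow> h \<in> M'" by blast
        have "h \<in> M'" if "h \<in> M" "z' \<in> ends h" for h
        proof -
          have "z' \<in> A" "z' \<in> V" using z' ball_A AB unfolding bipartition_def by blast+
          with that have "ends h = {z', ?m z'}" "?m z' \<in> B"
            using perfect_matching_edge_mate(1)[OF mg pm] mate_side[OF mg pm AB] by auto
          moreover have "?m z' \<notin> ball n" using ball_A[of n] disj \<open>?m z' \<in> B\<close> by blast
          ultimately have "ends h \<inter> ball n = {}" using False by auto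
          with keep that(1) show ?thesis by blast
        qed
        then obtain M'' where "near_perfect_matching V E ends M'' {y, z'}"
            "\<forall>k\<in>M'. z' \<notin> ends k \<longrightarrow> k \<in> M''"
          using near_perfect_matching_alternating_step[OF mg pm AB \<open>y \<in> B\<close> M' step] by blast
        with keep ball_mono z' show ?thesis by blast
      qed
    qed
  qed
  moreover obtain n where "z \<in> ball n"
    using rtrancl_imp_relpow[OF reach] unfolding ball_def by blast
  ultimately show thesis using that by blast
qed

lemma not_admissible_tight_set:
  assumes mg: "multigraph V E ends" and pm: "perfect_matching V E ends M"
    and AB: "bipartition V E ends A B"
    and e: "e \<in> E" "ends e = {x, y}" "x \<in> A" "y \<in> B"
    and not_adm: "\<not> admissible V E ends e"
  obtains X where "X \<subseteq> A" "x \<notin> X" "y \<in> neighbours E ends X"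
    "card (neighbours E ends X) \<le> card X"
proof -
  let ?R = "alternating_step E M ends B" and ?m = "mate M ends"
  define X where "X = ?R\<^sup>* `` {?m y}"
  have AV: "A \<subseteq> V" and BV: "B \<subseteq> V" using AB unfolding bipartition_def by blast+
  have x0A: "?m y \<in> A" using mate_side[OF mg pm bipartition_swap[OF AB]] e(4) BV by blast
  have XA: "X \<subseteq> A" unfolding X_def using alternating_rtrancl_side[OF mg pm AB _ x0A] by blast
  have "x \<notin> X"
  proof
    assume "x \<in> X"
    then obtain M' where "near_perfect_matching V E ends M' {y, x}"
      using alternating_reachable_near_perfect_matching[OF mg pm AB e(4)] unfolding X_def by blast
    from near_perfect_matching_insert[OF this e(1)] e(2)
    have "perfect_matching V E ends (insert e M')" by (simp add: near_perfect_matching_empty)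
    with not_adm show False unfolding admissible_def by blast
  qed
  have "neighbours E ends X \<subseteq> ?m ` X"
  proof
    fix v assume "v \<in> neighbours E ends X"
    then obtain g z where g: "g \<in> E" "z \<in> X" "ends g = {z, v}" unfolding neighbours_def by blast
    have "v \<in> B" using bipartition_edge[OF AB g(1,3)] g(2) XA by blast
    then have "(z, ?m v) \<in> ?R" using g unfolding alternating_step_def by blast
    with g(2) have "?m v \<in> X" unfolding X_def by (blast intro: rtrancl_into_rtrancl)
    moreover have "v = ?m (?m v)" using mate_mate[OF mg pm] \<open>v \<in> B\<close> BV by auto
    ultimately show "v \<in> ?m ` X" by blast
  qed
  moreover have "finite X" using XA AV mg unfolding multigraph_def by (auto intro: finite_subset)
  ultimately have "card (neighbours E ends X) \<le> card X"
    by (meson card_image_le card_mono finite_imageI le_trans)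
  moreover obtain g0 where g0: "g0 \<in> M" "ends g0 = {y, ?m y}"
    using perfect_matching_mate[OF mg pm] e(4) BV by blast
  then have "y \<in> neighbours E ends X"
    using pm unfolding X_def neighbours_def perfect_matching_def by (auto simp: insert_commute)
  ultimately show thesis using that XA \<open>x \<notin> X\<close> by blast
qed

lemma not_removable_tight_set:
  assumes mc: "matching_covered V E ends" and AB: "bipartition V E ends A B"
    and f: "f \<in> E" "ends f = {u, a}" "u \<in> A"
    and conn: "graph_connected V (E - {f}) ends"
    and pm: "perfect_matching V (E - {f}) ends M"
    and not_rem: "\<not> removable V E ends f"
  obtains X where "X \<subseteq> A" "u \<in> X" "a \<notin> neighbours (E - {f}) ends X"
    "card (neighbours E ends X) \<le> card X + 1"
proof -
  let ?N = "neighbours E ends" and ?N' = "neighbours (E - {f}) ends"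
  have mg: "multigraph V E ends" using mc unfolding matching_covered_def by simp
  have mg': "multigraph V (E - {f}) ends" using mg unfolding multigraph_def by simp
  have AB': "bipartition V (E - {f}) ends A B" by (rule bipartition_mono[OF AB]) blast
  have "\<not> matching_covered V (E - {f}) ends" using not_rem f(1) unfolding removable_def by simp
  then obtain e where e: "e \<in> E - {f}" "\<not> admissible V (E - {f}) ends e"
    using mg' conn mc unfolding matching_covered_def by blast
  obtain p q where pq: "p \<in> A" "q \<in> B" "ends e = {p, q}"
    using AB e(1) unfolding bipartition_def by blast
  obtain X where X: "X \<subseteq> A" "p \<notin> X" "q \<in> ?N' X" "card (?N' X) \<le> card X"
    using not_admissible_tight_set[OF mg' pm AB' e(1) pq(3,1,2) e(2)] by blast
  have "X \<noteq> {}" using X(3) unfolding neighbours_def by blast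
  with matching_covered_surplus[OF mc AB X(1) _ pq(1) X(2)] have surplus: "card X < card (?N X)"
    by blast
  have "a \<notin> X" using bipartition_edge[OF AB f(1,2)] f(3) X(1) AB
    unfolding bipartition_def by blast
  then have N_sub: "?N X \<subseteq> insert a (?N' X)"
    using neighbours_subset_insert_Diff_edge[of ends f u a X E] f(2) by blast
  have fin: "finite (?N' X)" using finite_neighbours[OF mg'] .
  \<comment> \<open>Removing f must cost X a neighbour, for otherwise X would still be tight in G.\<close>
  have "\<not> ?N X \<subseteq> ?N' X"
    using surplus X(4) card_mono[OF fin] by (meson le_trans not_le)
  then have "u \<in> X" "a \<notin> ?N' X"
    using N_sub neighbours_Diff_edge[of ends f X E] f(2) \<open>a \<notin> X\<close> by auto
  moreover have "card (?N X) \<le> card X + 1"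
  proof -
    have "card (?N X) \<le> card (insert a (?N' X))" using card_mono[OF _ N_sub] fin by simp
    also have "\<dots> \<le> card (?N' X) + 1" using fin by (simp add: card_insert_if)
    finally show ?thesis using X(4) by simp
  qed
  ultimately show thesis using that X(1) by blast
qed

lemma not_removable_cycle_edge_tight_set:
  assumes mc: "matching_covered V E ends" and AB: "bipartition V E ends A B" and "u \<in> A"
    and cycle: "distinct [u, a, w, b]" "f \<in> E" "g \<in> E" "h \<in> E" "k \<in> E"
      "ends f = {u, a}" "ends g = {a, w}" "ends h = {w, b}" "ends k = {b, u}"
    and not_rem: "\<not> removable V E ends f"
  obtains X where "X \<subseteq> A" "u \<in> X" "w \<notin> X" "a \<notin> neighbours (E - {f}) ends X"
    "card (neighbours E ends X) \<le> card X + 1"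
proof -
  have mg: "multigraph V E ends" using mc unfolding matching_covered_def by simp
  have ne: "g \<noteq> f" "h \<noteq> f" "k \<noteq> f" using cycle by (auto simp: doubleton_eq_iff)
  have "g \<in> E - {f}" "h \<in> E - {f}" "k \<in> E - {f}" using cycle(3-5) ne by blast+
  then have "(a, u) \<in> (adj_rel (E - {f}) ends)\<^sup>*"
    using adj_rel_rtranclI[of g "E - {f}"] adj_rel_rtranclI[of h "E - {f}"]
      adj_rel_rtranclI[of k "E - {f}"] cycle(7-9) by (meson rtrancl_trans)
  moreover have "ends f = {a, u}" using cycle(6) by (simp add: insert_commute)
  moreover have "graph_connected V E ends" using mc unfolding matching_covered_def by simp
  ultimately have conn: "graph_connected V (E - {f}) ends" by (intro graph_connected_Diff_edge)
  obtain M where M: "perfect_matching V E ends M" "g \<in> M"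
    using mc cycle(3) unfolding matching_covered_def admissible_def by blast
  have "a \<in> V" using mg cycle(2,6) unfolding multigraph_def by blast
  \<comment> \<open>f and g share the vertex a, so a perfect matching through g avoids f.\<close>
  then have "f \<notin> M" using perfect_matching_unique[OF M(1) _ _ M(2)] cycle(6,7) ne(1) by blast
  with M(1) have "perfect_matching V (E - {f}) ends M" unfolding perfect_matching_def by blast
  with not_removable_tight_set[OF mc AB cycle(2,6) \<open>u \<in> A\<close> conn _ not_rem]
  obtain X where X: "X \<subseteq> A" "u \<in> X" "a \<notin> neighbours (E - {f}) ends X"
      "card (neighbours E ends X) \<le> card X + 1" by blast
  have "w \<notin> X"
  proof
    assume "w \<in> X"
    with cycle(3,7) ne(1) have "a \<in> neighbours (E - {f}) ends X"
      unfolding neighbours_def by (auto simp: insert_commute)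
    with X(3) show False by contradiction
  qed
  with X that show thesis by blast
qed

lemma tight_sets_Int:
  assumes mc: "matching_covered V E ends" and AB: "bipartition V E ends A B"
    and XY: "X \<subseteq> A" "Y \<subseteq> A" "X \<noteq> {}" "w \<in> A" "w \<notin> X \<union> Y"
    and tight: "card (neighbours E ends X) \<le> card X + 1" "card (neighbours E ends Y) \<le> card Y + 1"
  shows "card (neighbours E ends (X \<inter> Y)) \<le> card (X \<inter> Y) + 1"
proof -
  let ?N = "neighbours E ends"
  have mg: "multigraph V E ends" using mc unfolding matching_covered_def by simp
  have fin: "finite X" "finite Y"
    using XY(1,2) AB mg unfolding bipartition_def multigraph_def by (auto intro: finite_subset)
  have "card (X \<union> Y) < card (?N X \<union> ?N Y)"
    using matching_covered_surplus[OF mc AB _ _ XY(4,5)] XY(1-3) neighbours_Un[of E ends X Y] by auto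
  moreover have "card (?N X \<union> ?N Y) + card (?N X \<inter> ?N Y) = card (?N X) + card (?N Y)"
    using card_Un_Int[OF finite_neighbours[OF mg] finite_neighbours[OF mg]] by simp
  moreover have "card (X \<union> Y) + card (X \<inter> Y) = card X + card Y"
    using card_Un_Int[OF fin] by simp
  moreover have "?N (X \<inter> Y) \<subseteq> ?N X \<inter> ?N Y"
    using neighbours_mono[of "X \<inter> Y" X E ends] neighbours_mono[of "X \<inter> Y" Y E ends] by blast
  then have "card (?N (X \<inter> Y)) \<le> card (?N X \<inter> ?N Y)"
    using finite_neighbours[OF mg] by (intro card_mono) auto
  ultimately show ?thesis using tight by linarith
qed

lemma degree_ge_3_third_edge:
  assumes mg: "multigraph V E ends" and "3 \<le> degree E ends u"
  obtains g c where "g \<in> E" "g \<noteq> f1" "g \<noteq> f2" "ends g = {u, c}"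
proof -
  have fin: "finite {e\<in>E. u \<in> ends e}" using mg unfolding multigraph_def by simp
  have "\<not> {e\<in>E. u \<in> ends e} \<subseteq> {f1, f2}"
  proof
    assume "{e\<in>E. u \<in> ends e} \<subseteq> {f1, f2}"
    then have "card {e\<in>E. u \<in> ends e} \<le> card {f1, f2}" by (rule card_mono[rotated]) simp
    also have "\<dots> \<le> 2" by (simp add: card_insert_if)
    finally show False using assms(2) unfolding degree_def by simp
  qed
  then obtain g where g: "g \<in> E" "u \<in> ends g" "g \<noteq> f1" "g \<noteq> f2" by blast
  then have "card (ends g) = 2" using mg unfolding multigraph_def by blast
  then obtain x y where "ends g = {x, y}" by (auto simp: card_2_iff)
  with g(2) have "ends g = {u, y} \<or> ends g = {u, x}" by (auto simp: insert_commute)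
  with g that show thesis by blast
qed

lemma private_neighbours_surplus:
  assumes mc: "matching_covered V E ends" and AB: "bipartition V E ends A B"
    and Z: "Z \<subseteq> A" "u \<in> Z" "w \<in> A" "w \<notin> Z" and deg: "3 \<le> degree E ends u"
    and f1: "f1 \<in> E" "ends f1 = {u, a}" "a \<notin> neighbours (E - {f1}) ends Z"
    and f2: "f2 \<in> E" "ends f2 = {u, b}" "b \<notin> neighbours (E - {f2}) ends Z"
    and "a \<noteq> b"
  shows "card Z + 2 \<le> card (neighbours E ends Z)"
proof -
  let ?N = "neighbours E ends"
  have mg: "multigraph V E ends" using mc unfolding matching_covered_def by simp
  have "finite Z" using Z(1) AB mg unfolding bipartition_def multigraph_def by (auto intro: finite_subset)
  have ab: "a \<in> ?N Z" "b \<in> ?N Z" using f1(1,2) f2(1,2) Z(2) unfolding neighbours_def by blast+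
  have "a \<notin> A" "b \<notin> A"
    using bipartition_edge[OF AB f1(1,2)] bipartition_edge[OF AB f2(1,2)] Z(1,2) AB
    unfolding bipartition_def by blast+
  then have "ends f1 \<inter> (Z - {u}) = {}" "ends f2 \<inter> (Z - {u}) = {}" using f1(2) f2(2) Z(1) by auto
  then have "a \<notin> ?N (Z - {u})" "b \<notin> ?N (Z - {u})"
    using neighbours_Diff_edge[of ends f1 "Z - {u}" E] neighbours_Diff_edge[of ends f2 "Z - {u}" E]
      neighbours_mono[of "Z - {u}" Z "E - {f1}" ends] neighbours_mono[of "Z - {u}" Z "E - {f2}" ends]
      f1(3) f2(3) by blast+
  show ?thesis
  proof (cases "Z - {u} = {}")
    case True
    obtain g c where g: "g \<in> E" "g \<noteq> f1" "g \<noteq> f2" "ends g = {u, c}"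
      using degree_ge_3_third_edge[OF mg deg] .
    have "c \<in> ?N Z" "c \<noteq> a" "c \<noteq> b"
      using g Z(2) f1(3) f2(3) unfolding neighbours_def by blast+
    with ab have "{a, b, c} \<subseteq> ?N Z" by blast
    then have "card {a, b, c} \<le> card (?N Z)" by (rule card_mono[OF finite_neighbours[OF mg]])
    moreover have "Z = {u}" using True Z(2) by blast
    ultimately show ?thesis using \<open>c \<noteq> a\<close> \<open>c \<noteq> b\<close> \<open>a \<noteq> b\<close> by simp
  next
    case False
    have "card (Z - {u}) < card (?N (Z - {u}))"
      using matching_covered_surplus[OF mc AB _ False Z(3)] Z(1,4) by blast
    moreover have "insert a (insert b (?N (Z - {u}))) \<subseteq> ?N Z"
      using ab neighbours_mono[of "Z - {u}" Z] by blast
    then have "card (insert a (insert b (?N (Z - {u})))) \<le> card (?N Z)"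
      by (rule card_mono[OF finite_neighbours[OF mg]])
    ultimately show ?thesis
      using \<open>a \<notin> ?N (Z - {u})\<close> \<open>b \<notin> ?N (Z - {u})\<close> \<open>a \<noteq> b\<close> \<open>finite Z\<close> Z(2)
        finite_neighbours[OF mg] by (simp add: card_Diff_singleton)
  qed
qed

lemma in_common_4cycle_at:
  assumes "in_common_4cycle V E ends f1 f2" "u \<in> ends f1" "u \<in> ends f2"
    and AB: "bipartition V E ends A B" and "u \<in> A"
  obtains a w b f3 f4 where "distinct [u, a, w, b]" "f3 \<in> E" "f4 \<in> E"
    "ends f1 = {u, a}" "ends f3 = {a, w}" "ends f4 = {w, b}" "ends f2 = {b, u}" "w \<in> A"
proof -
  obtain u' a w b f3 f4 where cyc: "distinct [u', a, w, b]" "f1 \<in> E" "f3 \<in> E" "f4 \<in> E"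
      "ends f1 = {u', a}" "ends f3 = {a, w}" "ends f4 = {w, b}" "ends f2 = {b, u'}"
    using assms(1) unfolding in_common_4cycle_def by (elim exE conjE) (rule that)
  have "u = u'"
  proof (rule ccontr)
    assume "u \<noteq> u'"
    with assms(2,3) cyc(5,8) have "u = a" "u = b" by auto
    with cyc(1) show False by simp
  qed
  with cyc(5) have "ends f1 = {u, a}" by simp
  with bipartition_edge[OF AB cyc(2) this] \<open>u \<in> A\<close> have "a \<in> B" by simp
  then have "w \<in> A" using bipartition_edge[OF AB cyc(3), of w a] cyc(6) by (simp add: insert_commute)
  with cyc \<open>u = u'\<close> show thesis using that[of a w b f3 f4] by blast
qed

theorem mainTheorem4:
  fixes V :: "'v set" and E :: "'e set" and ends :: "'e \<Rightarrow> 'v set"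
    and u :: 'v and f1 f2 :: 'e
  assumes "matching_covered V E ends"
    and "bipartite V E ends"
    and "u \<in> V"
    and "degree E ends u \<ge> 3"
    and "f1 \<in> E" and "f2 \<in> E"
    and "u \<in> ends f1" and "u \<in> ends f2"
    and "in_common_4cycle V E ends f1 f2"
  shows "removable V E ends f1 \<or> removable V E ends f2"
proof (rule ccontr)
  assume "\<not> (removable V E ends f1 \<or> removable V E ends f2)"
  then have nr: "\<not> removable V E ends f1" "\<not> removable V E ends f2" by auto
  obtain A B where AB: "bipartition V E ends A B" and "u \<in> A"
    using bipartite_obtain_side[OF assms(2,3)] .
  obtain a w b f3 f4 where cyc: "distinct [u, a, w, b]" "f3 \<in> E" "f4 \<in> E"
      "ends f1 = {u, a}" "ends f3 = {a, w}" "ends f4 = {w, b}" "ends f2 = {b, u}" "w \<in> A"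
    using in_common_4cycle_at[OF assms(9,7,8) AB \<open>u \<in> A\<close>] .
  obtain X where X: "X \<subseteq> A" "u \<in> X" "w \<notin> X" "a \<notin> neighbours (E - {f1}) ends X"
      "card (neighbours E ends X) \<le> card X + 1"
    using not_removable_cycle_edge_tight_set[OF assms(1) AB \<open>u \<in> A\<close> cyc(1) assms(5) cyc(2,3)
        assms(6) cyc(4-7) nr(1)] .
  obtain Y where Y: "Y \<subseteq> A" "u \<in> Y" "w \<notin> Y" "b \<notin> neighbours (E - {f2}) ends Y"
      "card (neighbours E ends Y) \<le> card Y + 1"
    using not_removable_cycle_edge_tight_set[of V E ends A B u b w a f2 f4 f3 f1] assms(1,5,6) AB
      \<open>u \<in> A\<close> cyc nr(2) by (auto simp: insert_commute)
  have "card (neighbours E ends (X \<inter> Y)) \<le> card (X \<inter> Y) + 1"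
    using tight_sets_Int[OF assms(1) AB X(1) Y(1) _ cyc(8)] X Y by blast
  moreover have "card (X \<inter> Y) + 2 \<le> card (neighbours E ends (X \<inter> Y))"
  proof (rule private_neighbours_surplus[OF assms(1) AB _ _ cyc(8) _ assms(4,5) cyc(4) _ assms(6)])
    show "a \<notin> neighbours (E - {f1}) ends (X \<inter> Y)"
      using X(4) neighbours_mono[of "X \<inter> Y" X "E - {f1}" ends] by blast
    show "b \<notin> neighbours (E - {f2}) ends (X \<inter> Y)"
      using Y(4) neighbours_mono[of "X \<inter> Y" Y "E - {f2}" ends] by blast
    show "ends f2 = {u, b}" using cyc(7) by (simp add: insert_commute)
  qed (use X Y cyc(1) in auto)
  ultimately show False by linarith
qed

end
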